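(* In generalized non-signalling theory (box world), consider a system of boxes each of which has at least two possible outputs. Suppose $\mathbf{R}$ and $\mathbf{S}$ are vectors both representing the same effect $\mu$, where $\mathbf{R}$ has exactly one non-zero entry and $\mathbf{S}$ has no negative entries. Then $\mathbf{R}=\mathbf{S}$.
   Context: Box world (GNST): a box has a finite set of inputs and outputs. A system of boxes has as states all collections $p(\mathbf{a}|\mathbf{x})\ge0$ (output tuple $\mathbf{a}$, input tuple $\mathbf{x}$) that are normalized ($\sum_{\mathbf{a}}p(\mathbf{a}|\mathbf{x})=1$ for all $\mathbf{x}$) and no-signalling (for each box $i$, $\sum_{a_i}p(\mathbf{a}|\mathbf{x})$ is independent of $x_i$). An effect is any linear map $\mu$ from the set of states to $[0,1]$; a real vector $\mathbf{R}$ indexed by pairs $(\mathbf{a},\mathbf{x})$ represents $\mu$ if $\mu(\mathbf{p})=\sum_{\mathbf{a},\mathbf{x}}p(\mathbf{a}|\mathbf{x})R(\mathbf{a}|\mathbf{x})$ for every state $\mathbf{p}$. *)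

theory Defs
  imports Complex_Main "HOL-Library.FuncSet"
begin

text \<open>A real vector indexed by pairs (a, x) is a function of type
  (nat \<Rightarrow> 'a) \<Rightarrow> (nat \<Rightarrow> 'x) \<Rightarrow> real; only its values on tuples matter.\<close>

definition out_tuples :: "nat \<Rightarrow> (nat \<Rightarrow> 'a set) \<Rightarrow> (nat \<Rightarrow> 'a) set" where
  "out_tuples n A = PiE {..<n} A"

definition in_tuples :: "nat \<Rightarrow> (nat \<Rightarrow> 'x set) \<Rightarrow> (nat \<Rightarrow> 'x) set" where
  "in_tuples n X = PiE {..<n} X"

definition is_state ::
  "nat \<Rightarrow> (nat \<Rightarrow> 'a set) \<Rightarrow> (nat \<Rightarrow> 'x set) \<Rightarrow> ((nat \<Rightarrow> 'a) \<Rightarrow> (nat \<Rightarrow> 'x) \<Rightarrow> real) \<Rightarrow> bool" where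
  "is_state n A X p \<longleftrightarrow>
     (\<forall>a\<in>out_tuples n A. \<forall>x\<in>in_tuples n X. 0 \<le> p a x) \<and>
     (\<forall>x\<in>in_tuples n X. (\<Sum>a\<in>out_tuples n A. p a x) = 1) \<and>
     (\<forall>i<n. \<forall>a\<in>out_tuples n A. \<forall>x\<in>in_tuples n X. \<forall>x'\<in>in_tuples n X.
        (\<forall>j<n. j \<noteq> i \<longrightarrow> x j = x' j) \<longrightarrow>
        (\<Sum>b\<in>A i. p (a(i := b)) x) = (\<Sum>b\<in>A i. p (a(i := b)) x'))"

definition is_effect ::
  "nat \<Rightarrow> (nat \<Rightarrow> 'a set) \<Rightarrow> (nat \<Rightarrow> 'x set) \<Rightarrow>
   (((nat \<Rightarrow> 'a) \<Rightarrow> (nat \<Rightarrow> 'x) \<Rightarrow> real) \<Rightarrow> real) \<Rightarrow> bool" where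
  "is_effect n A X \<mu> \<longleftrightarrow>
     (\<forall>p. is_state n A X p \<longrightarrow> 0 \<le> \<mu> p \<and> \<mu> p \<le> 1) \<and>
     (\<forall>p q t. is_state n A X p \<longrightarrow> is_state n A X q \<longrightarrow> 0 \<le> t \<longrightarrow> t \<le> 1 \<longrightarrow>
        \<mu> (\<lambda>a x. t * p a x + (1 - t) * q a x) = t * \<mu> p + (1 - t) * \<mu> q)"

definition represents ::
  "nat \<Rightarrow> (nat \<Rightarrow> 'a set) \<Rightarrow> (nat \<Rightarrow> 'x set) \<Rightarrow>
   ((nat \<Rightarrow> 'a) \<Rightarrow> (nat \<Rightarrow> 'x) \<Rightarrow> real) \<Rightarrow>
   (((nat \<Rightarrow> 'a) \<Rightarrow> (nat \<Rightarrow> 'x) \<Rightarrow> real) \<Rightarrow> real) \<Rightarrow> bool" where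
  "represents n A X R \<mu> \<longleftrightarrow>
     (\<forall>p. is_state n A X p \<longrightarrow>
        \<mu> p = (\<Sum>a\<in>out_tuples n A. \<Sum>x\<in>in_tuples n X. p a x * R a x))"

end

theory Submission
  imports Defs
begin

text \<open>Every local deterministic strategy (box i answers a function of its own input only)
  is a state. Pairing such a point state with R, which has a single non-zero entry at (a0, x0),
  gives R a0 x0 or 0 according to whether the strategy sends x0 to a0. Because boxes have two
  outputs, any other entry (a, x) is hit by a local strategy that avoids (a0, x0); pairing it with
  the non-negative S then gives 0, forcing S a x = 0. The constant strategy a0 finally yields
  S a0 x0 = R a0 x0.\<close>

lemma finite_out_tuples:
  "(\<And>i. i < n \<Longrightarrow> finite (A i)) \<Longrightarrow> finite (out_tuples n A)"
  unfolding out_tuples_def by (rule finite_PiE) auto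

lemma finite_in_tuples:
  "(\<And>i. i < n \<Longrightarrow> finite (X i)) \<Longrightarrow> finite (in_tuples n X)"
  unfolding in_tuples_def by (rule finite_PiE) auto

definition local_response ::
  "nat \<Rightarrow> (nat \<Rightarrow> 'a set) \<Rightarrow> (nat \<Rightarrow> 'x set) \<Rightarrow> ((nat \<Rightarrow> 'x) \<Rightarrow> (nat \<Rightarrow> 'a)) \<Rightarrow> bool" where
  "local_response n A X f \<longleftrightarrow>
     (\<forall>y\<in>in_tuples n X. f y \<in> out_tuples n A) \<and>
     (\<forall>j<n. \<forall>y\<in>in_tuples n X. \<forall>y'\<in>in_tuples n X. y j = y' j \<longrightarrow> f y j = f y' j)"

definition point_state ::
  "((nat \<Rightarrow> 'x) \<Rightarrow> (nat \<Rightarrow> 'a)) \<Rightarrow> (nat \<Rightarrow> 'a) \<Rightarrow> (nat \<Rightarrow> 'x) \<Rightarrow> real" where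
  "point_state f a y = (if a = f y then 1 else 0)"

lemma local_response_const:
  "a \<in> out_tuples n A \<Longrightarrow> local_response n A X (\<lambda>y. a)"
  unfolding local_response_def by simp

lemma sum_point_state_update:
  assumes "finite (A k)" "f y k \<in> A k"
  shows "(\<Sum>b\<in>A k. point_state f (a(k := b)) y) = (if \<forall>j. j \<noteq> k \<longrightarrow> a j = f y j then 1 else 0)"
proof -
  have "a(k := b) = f y \<longleftrightarrow> b = f y k \<and> (\<forall>j. j \<noteq> k \<longrightarrow> a j = f y j)" for b
    by (auto simp: fun_eq_iff)
  then show ?thesis
    using assms by (cases "\<forall>j. j \<noteq> k \<longrightarrow> a j = f y j") (simp_all add: point_state_def)
qed

lemma is_state_point_state:
  assumes finA: "\<And>i. i < n \<Longrightarrow> finite (A i)"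
    and f: "local_response n A X f"
  shows "is_state n A X (point_state f)"
proof -
  have out: "f y \<in> out_tuples n A" if "y \<in> in_tuples n X" for y
    using f that by (simp add: local_response_def)
  have loc: "f y j = f y' j"
    if "j < n" "y \<in> in_tuples n X" "y' \<in> in_tuples n X" "y j = y' j" for j y y'
    using f that unfolding local_response_def by blast
  have normalized: "(\<Sum>a\<in>out_tuples n A. point_state f a y) = 1" if "y \<in> in_tuples n X" for y
    using out[OF that] finite_out_tuples[OF finA] by (simp add: point_state_def)
  have no_signalling: "(\<Sum>b\<in>A i. point_state f (a(i := b)) y) = (\<Sum>b\<in>A i. point_state f (a(i := b)) y')"
    if i: "i < n" and y: "y \<in> in_tuples n X" and y': "y' \<in> in_tuples n X"
      and agree: "\<forall>j<n. j \<noteq> i \<longrightarrow> y j = y' j" for i a y y'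
  proof -
    have "f y j = f y' j" if "j \<noteq> i" for j
    proof (cases "j < n")
      case True
      then show ?thesis using loc y y' agree that by blast
    next
      case False
      then show ?thesis using out[OF y] out[OF y'] unfolding out_tuples_def by (metis PiE_arb lessThan_iff)
    qed
    moreover have "f y i \<in> A i" "f y' i \<in> A i"
      using out[OF y] out[OF y'] i by (auto simp: out_tuples_def)
    ultimately show ?thesis
      using finA[OF i] by (simp add: sum_point_state_update)
  qed
  show ?thesis
    unfolding is_state_def
    by (intro conjI ballI allI impI normalized no_signalling) (simp_all add: point_state_def)
qed

lemma sum_point_state_pairing:
  assumes "finite Out" "f ` I \<subseteq> Out"
  shows "(\<Sum>a\<in>Out. \<Sum>y\<in>I. point_state f a y * T a y) = (\<Sum>y\<in>I. T (f y) y)"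
proof -
  have "(\<Sum>a\<in>Out. \<Sum>y\<in>I. point_state f a y * T a y) = (\<Sum>y\<in>I. \<Sum>a\<in>Out. point_state f a y * T a y)"
    by (rule sum.swap)
  also have "\<dots> = (\<Sum>y\<in>I. T (f y) y)"
  proof (rule sum.cong[OF refl])
    fix y assume "y \<in> I"
    have "point_state f a y * T a y = (if a = f y then T a y else 0)" for a
      by (simp add: point_state_def)
    then show "(\<Sum>a\<in>Out. point_state f a y * T a y) = T (f y) y"
      using assms \<open>y \<in> I\<close> by auto
  qed
  finally show ?thesis .
qed

lemma sum_eq_single:
  assumes "finite I" "x0 \<in> I" "\<And>x. x \<in> I \<Longrightarrow> x \<noteq> x0 \<Longrightarrow> g x = 0"
  shows "sum g I = g x0"
  using assms by (simp add: sum.remove sum.neutral)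

lemma exists_separating_local_response:
  assumes twoA: "\<And>i. i < n \<Longrightarrow> card (A i) \<ge> 2"
    and a: "a \<in> out_tuples n A" and a0: "a0 \<in> out_tuples n A"
    and x: "x \<in> in_tuples n X" and x0: "x0 \<in> in_tuples n X"
    and ne: "(a, x) \<noteq> (a0, x0)"
  obtains f where "local_response n A X f" "f x = a" "f x0 \<noteq> a0"
proof (cases "a = a0")
  case False
  show ?thesis
    by (rule that[of "\<lambda>y. a"]) (simp_all add: local_response_const a False)
next
  case True
  with ne have "x \<noteq> x0" by simp
  then obtain i where i: "i < n" and xi: "x i \<noteq> x0 i"
    using x x0 unfolding in_tuples_def by (metis PiE_ext lessThan_iff)
  have "\<not> A i \<subseteq> {a0 i}"
    using twoA[OF i] card_mono[of "{a0 i}" "A i"] by auto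
  then obtain c where c: "c \<in> A i" "c \<noteq> a0 i" by blast
  define f where "f y = a0(i := if y i = x i then a0 i else c)" for y
  have "local_response n A X f"
    using a0 c i unfolding local_response_def f_def out_tuples_def
    by (auto simp: PiE_iff extensional_def)
  moreover have "f x = a" "f x0 \<noteq> a0"
    using True xi c unfolding f_def by (auto simp: fun_eq_iff)
  ultimately show ?thesis using that by blast
qed

theorem lemma9:
  fixes n :: nat
    and A :: "nat \<Rightarrow> 'a set" and X :: "nat \<Rightarrow> 'x set"
    and R S :: "(nat \<Rightarrow> 'a) \<Rightarrow> (nat \<Rightarrow> 'x) \<Rightarrow> real"
    and \<mu> :: "((nat \<Rightarrow> 'a) \<Rightarrow> (nat \<Rightarrow> 'x) \<Rightarrow> real) \<Rightarrow> real"
  assumes finA: "\<And>i. i < n \<Longrightarrow> finite (A i)"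
    and finX: "\<And>i. i < n \<Longrightarrow> finite (X i)"
    and neX: "\<And>i. i < n \<Longrightarrow> X i \<noteq> {}"
    and twoA: "\<And>i. i < n \<Longrightarrow> card (A i) \<ge> 2"
    and eff: "is_effect n A X \<mu>"
    and repR: "represents n A X R \<mu>"
    and repS: "represents n A X S \<mu>"
    and oneR: "\<exists>!ax. ax \<in> out_tuples n A \<times> in_tuples n X \<and> R (fst ax) (snd ax) \<noteq> 0"
    and nonnegS: "\<forall>a\<in>out_tuples n A. \<forall>x\<in>in_tuples n X. 0 \<le> S a x"
  shows "\<forall>a\<in>out_tuples n A. \<forall>x\<in>in_tuples n X. R a x = S a x"
proof -
  obtain a0 x0 where a0: "a0 \<in> out_tuples n A" and x0: "x0 \<in> in_tuples n X"
    and R_zero: "\<And>a x. a \<in> out_tuples n A \<Longrightarrow> x \<in> in_tuples n X \<Longrightarrow> (a, x) \<noteq> (a0, x0) \<Longrightarrow> R a x = 0"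
    using oneR by (metis SigmaE SigmaI fst_conv snd_conv)
  have response_sum: "(\<Sum>y\<in>in_tuples n X. S (f y) y) = (if f x0 = a0 then R a0 x0 else 0)"
    if f: "local_response n A X f" for f
  proof -
    have image: "f ` in_tuples n X \<subseteq> out_tuples n A"
      using f by (auto simp: local_response_def)
    have "(\<Sum>y\<in>in_tuples n X. S (f y) y) = \<mu> (point_state f)"
      using repS is_state_point_state[OF finA f]
      by (simp add: represents_def sum_point_state_pairing[OF finite_out_tuples[OF finA] image])
    also have "\<dots> = (\<Sum>y\<in>in_tuples n X. R (f y) y)"
      using repR is_state_point_state[OF finA f]
      by (simp add: represents_def sum_point_state_pairing[OF finite_out_tuples[OF finA] image])
    also have "\<dots> = R (f x0) x0"
      using image by (intro sum_eq_single[OF finite_in_tuples[OF finX] x0]) (auto intro: R_zero)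
    finally show ?thesis using R_zero[OF _ x0] image x0 by auto
  qed
  have S_zero: "S a x = 0" if a: "a \<in> out_tuples n A" and x: "x \<in> in_tuples n X"
    and ne: "(a, x) \<noteq> (a0, x0)" for a x
  proof -
    obtain f where f: "local_response n A X f" "f x = a" "f x0 \<noteq> a0"
      using exists_separating_local_response[OF twoA a a0 x x0 ne] by blast
    then have "(\<Sum>y\<in>in_tuples n X. S (f y) y) = 0"
      using response_sum by simp
    moreover have "\<forall>y\<in>in_tuples n X. 0 \<le> S (f y) y"
      using f(1) nonnegS by (auto simp: local_response_def)
    ultimately show ?thesis
      using finite_in_tuples[OF finX] x f(2) by (auto simp: sum_nonneg_eq_0_iff)
  qed
  have "S a0 x0 = (\<Sum>y\<in>in_tuples n X. S a0 y)"
    using S_zero[OF a0] by (intro sum_eq_single[symmetric] finite_in_tuples finX x0) auto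
  also have "\<dots> = R a0 x0"
    using response_sum[OF local_response_const[OF a0]] by simp
  finally show ?thesis
    using R_zero S_zero by (metis prod.inject)
qed

end
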